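(* Let $G=(V,E)$ be a directed multigraph with arc costs $c\in\mathbb{R}^E$ and gains $\gamma\in\mathbb{R}^E_{>0}$, $u\in V$, $\mathcal{D}:=\{x\in\mathbb{R}^E_{\ge0}: x(\delta^+(u))=1,\ \nabla x_v=0\ \forall v\ne u\}$, and $f(\delta):=\inf_{x\in\mathcal{D}}\big(c^\top x+\delta\sum_{e\in\delta^-(u)}\gamma_ex_e-\delta\big)$. For any $\delta\in\mathbb{R}$, $f(\delta)=-\infty$ if and only if $\mathcal{D}\ne\emptyset$ and the graph $G\setminus\delta^+(u)$ contains a negative unit-gain cycle, a negative bicycle, or a $(\delta,u)$-negative flow-generating cycle.
   Context: $\delta^\pm(v)$: arcs leaving/entering $v$; $\nabla x_v:=\sum_{e\in\delta^+(v)}x_e-\sum_{e\in\delta^-(v)}\gamma_ex_e$. For a walk $P$ with arcs $e_1,\dots,e_k$: $c(P):=\sum_{i=1}^k(\prod_{j<i}\gamma_{e_j})c_{e_i}$, $\gamma(P):=\prod_i\gamma_{e_i}$. A cycle at $v$ is a $v$-$v$ walk whose intermediate nodes are distinct; it is flow-generating if $\gamma(C)>1$, unit-gain if $\gamma(C)=1$, flow-absorbing if $\gamma(C)<1$; a unit-gain cycle is negative if $c(C)<0$. A bicycle is a walk $CPD$ where $C$ is a flow-generating cycle at $v$, $D$ a flow-absorbing cycle at $w$, and $P$ a $v$-$w$ path; it is negative if $c(P)+\gamma(P)\frac{c(D)}{1-\gamma(D)}<\frac{-c(C)}{\gamma(C)-1}$. A flow-generating cycle $C$ is $(\delta,u)$-negative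 if there is a path $P$ from a node $v\in V(C)$ to $u$ such that $c(C)+(\gamma(C)-1)(c(P)+\gamma(P)\delta)<0$, where $C$ is regarded as a cycle at $v$. *)

theory Defs
  imports Complex_Main "HOL-Library.Extended_Real"
begin

fun walk :: "('e \<Rightarrow> 'v) \<Rightarrow> ('e \<Rightarrow> 'v) \<Rightarrow> 'e set \<Rightarrow> 'v \<Rightarrow> 'e list \<Rightarrow> 'v \<Rightarrow> bool" where
  "walk tail head A v [] w \<longleftrightarrow> v = w"
| "walk tail head A v (e # es) w \<longleftrightarrow> e \<in> A \<and> tail e = v \<and> walk tail head A (head e) es w"

definition walk_nodes :: "('e \<Rightarrow> 'v) \<Rightarrow> 'v \<Rightarrow> 'e list \<Rightarrow> 'v list" where
  "walk_nodes head v es = v # map head es"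

definition is_path :: "('e \<Rightarrow> 'v) \<Rightarrow> ('e \<Rightarrow> 'v) \<Rightarrow> 'e set \<Rightarrow> 'v \<Rightarrow> 'e list \<Rightarrow> 'v \<Rightarrow> bool" where
  "is_path tail head A v es w \<longleftrightarrow> walk tail head A v es w \<and> distinct (walk_nodes head v es)"

definition is_cycle :: "('e \<Rightarrow> 'v) \<Rightarrow> ('e \<Rightarrow> 'v) \<Rightarrow> 'e set \<Rightarrow> 'v \<Rightarrow> 'e list \<Rightarrow> bool" where
  "is_cycle tail head A v es \<longleftrightarrow> es \<noteq> [] \<and> walk tail head A v es v
     \<and> distinct (butlast (walk_nodes head v es))"

text \<open>c(P) = sum_i (prod_{j<i} gamma_{e_j}) c_{e_i};  gamma(P) = prod_i gamma_{e_i}.\<close>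
fun wcost :: "('e \<Rightarrow> real) \<Rightarrow> ('e \<Rightarrow> real) \<Rightarrow> 'e list \<Rightarrow> real" where
  "wcost c \<gamma> [] = 0"
| "wcost c \<gamma> (e # es) = c e + \<gamma> e * wcost c \<gamma> es"

fun wgain :: "('e \<Rightarrow> real) \<Rightarrow> 'e list \<Rightarrow> real" where
  "wgain \<gamma> [] = 1"
| "wgain \<gamma> (e # es) = \<gamma> e * wgain \<gamma> es"

definition has_neg_unit_gain_cycle where
  "has_neg_unit_gain_cycle tail head A c \<gamma> \<longleftrightarrow>
     (\<exists>v C. is_cycle tail head A v C \<and> wgain \<gamma> C = 1 \<and> wcost c \<gamma> C < 0)"

definition has_neg_bicycle where
  "has_neg_bicycle tail head A c \<gamma> \<longleftrightarrow>
     (\<exists>v w C P D. is_cycle tail head A v C \<and> wgain \<gamma> C > 1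
        \<and> is_cycle tail head A w D \<and> wgain \<gamma> D < 1
        \<and> is_path tail head A v P w
        \<and> wcost c \<gamma> P + wgain \<gamma> P * (wcost c \<gamma> D / (1 - wgain \<gamma> D))
            < - wcost c \<gamma> C / (wgain \<gamma> C - 1))"

text \<open>(delta,u)-negative flow-generating cycle; quantifying over all cycles at all
  nodes v covers "C regarded as a cycle at v" for every v in V(C).\<close>
definition has_du_neg_fg_cycle where
  "has_du_neg_fg_cycle tail head A c \<gamma> \<delta> u \<longleftrightarrow>
     (\<exists>v C P. is_cycle tail head A v C \<and> wgain \<gamma> C > 1
        \<and> is_path tail head A v P u
        \<and> wcost c \<gamma> C + (wgain \<gamma> C - 1) * (wcost c \<gamma> P + wgain \<gamma> P * \<delta>) < 0)"

definition netflow :: "('e \<Rightarrow> 'v) \<Rightarrow> ('e \<Rightarrow> 'v) \<Rightarrow> 'e set \<Rightarrow> ('e \<Rightarrow> real) \<Rightarrow> ('e \<Rightarrow> real) \<Rightarrow> 'v \<Rightarrow> real" where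
  "netflow tail head E \<gamma> x v = (\<Sum>e\<in>{e\<in>E. tail e = v}. x e) - (\<Sum>e\<in>{e\<in>E. head e = v}. \<gamma> e * x e)"

text \<open>Vectors in R^E are functions vanishing outside E.\<close>
definition Dset where
  "Dset V E tail head \<gamma> u = {x :: 'e \<Rightarrow> real. (\<forall>e. e \<notin> E \<longrightarrow> x e = 0) \<and> (\<forall>e\<in>E. x e \<ge> 0)
      \<and> (\<Sum>e\<in>{e\<in>E. tail e = u}. x e) = 1
      \<and> (\<forall>v\<in>V - {u}. netflow tail head E \<gamma> x v = 0)}"

definition fval :: "'v set \<Rightarrow> 'e set \<Rightarrow> ('e \<Rightarrow> 'v) \<Rightarrow> ('e \<Rightarrow> 'v) \<Rightarrow> ('e \<Rightarrow> real) \<Rightarrow> ('e \<Rightarrow> real) \<Rightarrow> 'v \<Rightarrow> real \<Rightarrow> ereal" where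
  "fval V E tail head c \<gamma> u \<delta> = (INF x\<in>Dset V E tail head \<gamma> u.
      ereal ((\<Sum>e\<in>E. c e * x e) + \<delta> * (\<Sum>e\<in>{e\<in>E. head e = u}. \<gamma> e * x e) - \<delta>))"

end

theory Submission
  imports Defs
begin

text \<open>
  Up to the constant -\<delta>, f(\<delta>) is the value of a linear program in standard form over the
  polyhedron D, so it is -\<infinity> iff D is nonempty and the recession cone of D contains an improving
  ray; otherwise the objective is bounded below by its values at the finitely many vertices.
  The cone consists of the nonnegative flows y that leave u unused and are conserved at every other
  node, with objective c(y) + \<delta> * (inflow of y into u).

  A negative unit-gain cycle, negative bicycle or (\<delta>,u)-negative flow-generating cycle carries
  such a flow (combine the flows of its cycles and path so that the excess of the generating cycle is
  absorbed), and its objective is negative exactly when the structure is negative.  Conversely,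
  take an improving ray of minimal support: every nonzero ray supported inside it is improving too.
  Its support S avoids the arcs leaving u, and weighting flow conservation with a node potential
  shows that S contains a cycle of gain at least 1: otherwise a potential p with
  \<gamma> e * p(head e) < p(tail e) on S exists and makes the weighted conservation sum positive.
  If that cycle is generating and its nodes cannot reach u inside S, the same argument on the part
  of S reachable from it, with a potential for generating cycles, yields a cycle of gain at most 1
  there.  So S contains a unit-gain cycle, a bicycle or a generating cycle with a path to u, whose
  flow is a ray supported in S, hence improving, hence the structure is negative.
\<close>

section \<open>Linear programs in standard form\<close>

definition support :: "('a \<Rightarrow> 'b::zero) \<Rightarrow> 'a set" where
  "support x = {e. x e \<noteq> 0}"

definition inner_on :: "'e set \<Rightarrow> ('e \<Rightarrow> real) \<Rightarrow> ('e \<Rightarrow> real) \<Rightarrow> real" where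
  "inner_on E w x = (\<Sum>e\<in>E. w e * x e)"

definition lp_polyhedron :: "'e set \<Rightarrow> 'i set \<Rightarrow> ('i \<Rightarrow> 'e \<Rightarrow> real) \<Rightarrow> ('i \<Rightarrow> real) \<Rightarrow> ('e \<Rightarrow> real) set" where
  "lp_polyhedron E I M b = {x. (\<forall>e. e \<notin> E \<longrightarrow> x e = 0) \<and> (\<forall>e\<in>E. 0 \<le> x e)
     \<and> (\<forall>i\<in>I. inner_on E (M i) x = b i)}"

definition lp_kernel :: "'e set \<Rightarrow> 'i set \<Rightarrow> ('i \<Rightarrow> 'e \<Rightarrow> real) \<Rightarrow> ('e \<Rightarrow> real) set" where
  "lp_kernel E I M = {z. (\<forall>e. e \<notin> E \<longrightarrow> z e = 0) \<and> (\<forall>i\<in>I. inner_on E (M i) z = 0)}"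

definition lp_vertex :: "'e set \<Rightarrow> 'i set \<Rightarrow> ('i \<Rightarrow> 'e \<Rightarrow> real) \<Rightarrow> ('e \<Rightarrow> real) \<Rightarrow> bool" where
  "lp_vertex E I M x \<longleftrightarrow> (\<forall>z\<in>lp_kernel E I M. support z \<subseteq> support x \<longrightarrow> z = (\<lambda>_. 0))"

lemma inner_on_lincomb:
  "inner_on E w (\<lambda>e. a * x e + b * y e) = a * inner_on E w x + b * inner_on E w y"
  by (simp add: inner_on_def sum.distrib sum_distrib_left algebra_simps)

lemma inner_on_add_scaled:
  "inner_on E w (\<lambda>e. x e + t * y e) = inner_on E w x + t * inner_on E w y"
  using inner_on_lincomb[of E w 1 x t y] by simp

lemma inner_on_zero [simp]: "inner_on E w (\<lambda>_. 0) = 0"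
  by (simp add: inner_on_def)

lemma lp_kernel_lincomb:
  "y \<in> lp_kernel E I M \<Longrightarrow> z \<in> lp_kernel E I M \<Longrightarrow> (\<lambda>e. a * y e + b * z e) \<in> lp_kernel E I M"
  by (simp add: lp_kernel_def inner_on_lincomb)

lemma lp_polyhedron_nonneg: "x \<in> lp_polyhedron E I M b \<Longrightarrow> 0 \<le> x e"
  by (cases "e \<in> E") (auto simp: lp_polyhedron_def)

lemma lp_cone_subset_kernel: "lp_polyhedron E I M (\<lambda>_. 0) \<subseteq> lp_kernel E I M"
  by (auto simp: lp_polyhedron_def lp_kernel_def)

lemma lp_kernel_nonneg_in_cone:
  "z \<in> lp_kernel E I M \<Longrightarrow> \<forall>e. 0 \<le> z e \<Longrightarrow> z \<in> lp_polyhedron E I M (\<lambda>_. 0)"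
  by (simp add: lp_polyhedron_def lp_kernel_def)

lemma lp_polyhedron_diff:
  "x \<in> lp_polyhedron E I M b \<Longrightarrow> x' \<in> lp_polyhedron E I M b \<Longrightarrow> (\<lambda>e. x e - x' e) \<in> lp_kernel E I M"
  using inner_on_lincomb[of E _ 1 x "-1" x'] by (simp add: lp_polyhedron_def lp_kernel_def)

lemma lp_polyhedron_add_kernel:
  assumes "x \<in> lp_polyhedron E I M b" "z \<in> lp_kernel E I M" "\<forall>e. 0 \<le> x e + t * z e"
  shows "(\<lambda>e. x e + t * z e) \<in> lp_polyhedron E I M b"
  using assms inner_on_add_scaled[of E _ x t z] by (simp add: lp_polyhedron_def lp_kernel_def)

lemma support_subset_if_vanishing: "\<forall>e. e \<notin> E \<longrightarrow> x e = 0 \<Longrightarrow> support x \<subseteq> E"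
  by (auto simp: support_def)

lemma ratio_test:
  fixes x z :: "'e \<Rightarrow> real"
  assumes fin: "finite (support x)" and x_nonneg: "\<forall>e. 0 \<le> x e"
    and supp: "support z \<subseteq> support x" and neg: "z e0 < 0"
  shows "\<exists>t\<ge>0. (\<forall>e. 0 \<le> x e + t * z e) \<and> support (\<lambda>e. x e + t * z e) \<subset> support x"
proof -
  define N where "N = {e. z e < 0}"
  have "N \<subseteq> support x" using supp by (force simp: N_def support_def)
  then have finN: "finite N" using fin finite_subset by blast
  have "e0 \<in> N" using neg by (simp add: N_def)
  define t where "t = Min ((\<lambda>e. x e / - z e) ` N)"
  have "t \<in> (\<lambda>e. x e / - z e) ` N"
    unfolding t_def using finN \<open>e0 \<in> N\<close> by (intro Min_in) auto
  then obtain e1 where e1: "e1 \<in> N" "t = x e1 / - z e1" by blast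
  have t_le: "t * - z e \<le> x e" if "e \<in> N" for e
  proof -
    have "t \<le> x e / - z e" unfolding t_def using finN that by simp
    moreover have "0 < - z e" using that by (simp add: N_def)
    ultimately show ?thesis by (simp only: pos_le_divide_eq)
  qed
  have "0 < - z e1" using e1 by (simp add: N_def)
  then have "0 \<le> t" using e1(2) x_nonneg[rule_format, of e1] by (simp add: divide_nonneg_neg)
  have nonneg: "0 \<le> x e + t * z e" for e
  proof (cases "e \<in> N")
    case True then show ?thesis using t_le[OF True] by linarith
  next
    case False then show ?thesis using \<open>0 \<le> t\<close> x_nonneg by (simp add: N_def not_less)
  qed
  have "z e1 \<noteq> 0" using e1(1) by (simp add: N_def)
  then have "x e1 + t * z e1 = 0" "e1 \<in> support x"
    using e1(2) supp by (auto simp: support_def)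
  moreover have "support (\<lambda>e. x e + t * z e) \<subseteq> support x"
    using supp by (auto simp: support_def)
  ultimately have "support (\<lambda>e. x e + t * z e) \<subset> support x"
    unfolding support_def by blast
  with \<open>0 \<le> t\<close> nonneg show ?thesis by blast
qed

lemma lp_descent_direction:
  assumes no_ray: "\<forall>z\<in>lp_polyhedron E I M (\<lambda>_. 0). 0 \<le> inner_on E w z"
    and z: "z \<in> lp_kernel E I M" "z \<noteq> (\<lambda>_. 0)"
  shows "\<exists>z'\<in>lp_kernel E I M. support z' = support z \<and> inner_on E w z' \<le> 0 \<and> (\<exists>e. z' e < 0)"
proof -
  define s :: real where "s = (if inner_on E w z \<le> 0 then 1 else -1)"
  define z1 where "z1 = (\<lambda>e. s * z e)"
  have s: "s \<noteq> 0" by (simp add: s_def)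
  have z1: "z1 \<in> lp_kernel E I M"
    using lp_kernel_lincomb[OF z(1) z(1), of s 0] by (simp add: z1_def)
  have supp_z1: "support z1 = support z"
    using s by (simp add: z1_def support_def)
  have "inner_on E w z1 = s * inner_on E w z"
    using inner_on_lincomb[of E w s z 0 z] by (simp add: z1_def)
  then have obj_z1: "inner_on E w z1 \<le> 0"
    by (simp add: s_def mult_nonpos_nonneg)
  show ?thesis
  proof (cases "\<exists>e. z1 e < 0")
    case True
    then show ?thesis using z1 supp_z1 obj_z1 by (intro bexI[of _ z1]) simp_all
  next
    case False
    then have "z1 \<in> lp_polyhedron E I M (\<lambda>_. 0)"
      using z1 by (intro lp_kernel_nonneg_in_cone) (auto simp: not_less)
    then have "inner_on E w z1 = 0" using no_ray obj_z1 by force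
    obtain e where "z e \<noteq> 0" using z(2) by auto
    then have "z1 e \<noteq> 0" using s by (simp add: z1_def)
    then have "- z1 e < 0" using False by (metis neg_less_0_iff_less order_le_less not_less)
    moreover have "(\<lambda>e. - z1 e) \<in> lp_kernel E I M" "inner_on E w (\<lambda>e. - z1 e) = 0"
      using lp_kernel_lincomb[OF z1 z1, of "-1" 0] inner_on_lincomb[of E w "-1" z1 0 z1]
        \<open>inner_on E w z1 = 0\<close> by simp_all
    moreover have "support (\<lambda>e. - z1 e) = support z" using supp_z1 by (simp add: support_def)
    ultimately show ?thesis by (intro bexI[of _ "\<lambda>e. - z1 e"] conjI exI[of _ e]) simp_all
  qed
qed

lemma lp_exists_better_vertex:
  assumes "finite E" and no_ray: "\<forall>z\<in>lp_polyhedron E I M (\<lambda>_. 0). 0 \<le> inner_on E w z"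
  shows "x \<in> lp_polyhedron E I M b \<Longrightarrow>
    \<exists>x'\<in>lp_polyhedron E I M b. lp_vertex E I M x' \<and> inner_on E w x' \<le> inner_on E w x"
proof (induction "card (support x)" arbitrary: x rule: less_induct)
  case less
  show ?case
  proof (cases "lp_vertex E I M x")
    case True
    then show ?thesis using less.prems by blast
  next
    case False
    then obtain z where z: "z \<in> lp_kernel E I M" "support z \<subseteq> support x" "z \<noteq> (\<lambda>_. 0)"
      by (auto simp: lp_vertex_def)
    obtain z' e0 where z': "z' \<in> lp_kernel E I M" "support z' = support z"
      "inner_on E w z' \<le> 0" "z' e0 < 0"
      using lp_descent_direction[OF no_ray z(1,3)] by blast
    have "support x \<subseteq> E"
      using less.prems by (intro support_subset_if_vanishing) (simp add: lp_polyhedron_def)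
    then have fin: "finite (support x)" using \<open>finite E\<close> finite_subset by blast
    obtain t where t: "0 \<le> t" "\<forall>e. 0 \<le> x e + t * z' e"
      "support (\<lambda>e. x e + t * z' e) \<subset> support x"
      using ratio_test[of x z' e0, OF fin _ _ z'(4)] lp_polyhedron_nonneg[OF less.prems] z(2) z'(2) by auto
    define x' where "x' = (\<lambda>e. x e + t * z' e)"
    have x': "x' \<in> lp_polyhedron E I M b"
      unfolding x'_def using lp_polyhedron_add_kernel[OF less.prems z'(1) t(2)] .
    have "card (support x') < card (support x)"
      using psubset_card_mono[OF fin t(3)] by (simp add: x'_def)
    then obtain x'' where "x'' \<in> lp_polyhedron E I M b" "lp_vertex E I M x''"
      "inner_on E w x'' \<le> inner_on E w x'"
      using less.hyps[OF _ x'] by blast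
    moreover have "inner_on E w x' \<le> inner_on E w x"
      using inner_on_add_scaled[of E w x t z'] t(1) z'(3)
      by (simp add: x'_def mult_nonneg_nonpos)
    ultimately show ?thesis by force
  qed
qed

lemma lp_vertex_determined_by_support:
  assumes "x \<in> lp_polyhedron E I M b" "x' \<in> lp_polyhedron E I M b"
    and "lp_vertex E I M x" "support x' = support x"
  shows "x' = x"
proof -
  have "support (\<lambda>e. x e - x' e) \<subseteq> support x"
    using assms(4) unfolding support_def by (smt (verit) mem_Collect_eq subsetI)
  then have "(\<lambda>e. x e - x' e) = (\<lambda>_. 0)"
    using assms(3) lp_polyhedron_diff[OF assms(1,2)] by (simp add: lp_vertex_def)
  then have "x e - x' e = 0" for e by (rule fun_cong)
  then show ?thesis by (simp add: fun_eq_iff)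
qed

lemma finite_lp_vertices:
  assumes "finite E"
  shows "finite {x\<in>lp_polyhedron E I M b. lp_vertex E I M x}"
proof (rule inj_on_finite)
  show "inj_on support {x\<in>lp_polyhedron E I M b. lp_vertex E I M x}"
  proof (rule inj_onI)
    fix x y
    assume "x \<in> {x\<in>lp_polyhedron E I M b. lp_vertex E I M x}"
      "y \<in> {x\<in>lp_polyhedron E I M b. lp_vertex E I M x}" "support x = support y"
    then show "x = y" using lp_vertex_determined_by_support[of y E I M b x] by simp
  qed
  show "support ` {x\<in>lp_polyhedron E I M b. lp_vertex E I M x} \<subseteq> Pow E"
    by (auto simp: lp_polyhedron_def support_def)
qed (use assms in simp)

lemma lp_bounded_below:
  assumes "finite E" and no_ray: "\<forall>z\<in>lp_polyhedron E I M (\<lambda>_. 0). 0 \<le> inner_on E w z"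
  shows "\<exists>B. \<forall>x\<in>lp_polyhedron E I M b. B \<le> inner_on E w x"
proof -
  let ?X = "{x\<in>lp_polyhedron E I M b. lp_vertex E I M x}"
  have "- (\<Sum>x'\<in>?X. \<bar>inner_on E w x'\<bar>) \<le> inner_on E w x" if x: "x \<in> lp_polyhedron E I M b" for x
  proof -
    obtain x' where "x' \<in> ?X" "inner_on E w x' \<le> inner_on E w x"
      using lp_exists_better_vertex[OF assms x] by blast
    moreover have "\<bar>inner_on E w x'\<bar> \<le> (\<Sum>x'\<in>?X. \<bar>inner_on E w x'\<bar>)"
      using \<open>x' \<in> ?X\<close> finite_lp_vertices[OF \<open>finite E\<close>] by (intro member_le_sum) auto
    ultimately show ?thesis by linarith
  qed
  then show ?thesis by blast
qed

theorem lp_unbounded_iff_improving_ray: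
  assumes "finite E"
  shows "(\<forall>B. \<exists>x\<in>lp_polyhedron E I M b. inner_on E w x < B) \<longleftrightarrow>
    lp_polyhedron E I M b \<noteq> {} \<and> (\<exists>z\<in>lp_polyhedron E I M (\<lambda>_. 0). inner_on E w z < 0)"
proof
  assume unbounded: "\<forall>B. \<exists>x\<in>lp_polyhedron E I M b. inner_on E w x < B"
  then have "lp_polyhedron E I M b \<noteq> {}" by blast
  moreover have "\<exists>z\<in>lp_polyhedron E I M (\<lambda>_. 0). inner_on E w z < 0"
  proof (rule ccontr)
    assume "\<not> ?thesis"
    then obtain B where "\<forall>x\<in>lp_polyhedron E I M b. B \<le> inner_on E w x"
      using lp_bounded_below[OF assms, of I M w b] by (auto simp: not_less)
    then show False using unbounded by (meson not_less)
  qed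
  ultimately show "lp_polyhedron E I M b \<noteq> {} \<and> (\<exists>z\<in>lp_polyhedron E I M (\<lambda>_. 0). inner_on E w z < 0)"
    by blast
next
  assume "lp_polyhedron E I M b \<noteq> {} \<and> (\<exists>z\<in>lp_polyhedron E I M (\<lambda>_. 0). inner_on E w z < 0)"
  then obtain x z where x: "x \<in> lp_polyhedron E I M b"
    and z: "z \<in> lp_polyhedron E I M (\<lambda>_. 0)" "inner_on E w z < 0" by blast
  show "\<forall>B. \<exists>x\<in>lp_polyhedron E I M b. inner_on E w x < B"
  proof
    fix B
    define t where "t = (\<bar>B\<bar> + \<bar>inner_on E w x\<bar> + 1) / - inner_on E w z"
    have "0 \<le> t" using z(2) unfolding t_def by (intro divide_nonneg_pos) auto
    then have "\<forall>e. 0 \<le> x e + t * z e"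
      using lp_polyhedron_nonneg[OF x] lp_polyhedron_nonneg[OF z(1)] by simp
    then have "(\<lambda>e. x e + t * z e) \<in> lp_polyhedron E I M b"
      using lp_polyhedron_add_kernel[OF x] lp_cone_subset_kernel z(1) by blast
    moreover have "inner_on E w (\<lambda>e. x e + t * z e) < B"
      using inner_on_add_scaled[of E w x t z] z(2) by (simp add: t_def)
    ultimately show "\<exists>x\<in>lp_polyhedron E I M b. inner_on E w x < B" by blast
  qed
qed

lemma INF_ereal_eq_minf_iff: "(INF x\<in>X. ereal (f x)) = -\<infinity> \<longleftrightarrow> (\<forall>B. \<exists>x\<in>X. f x < B)"
proof -
  have "(\<exists>b>-\<infinity>. \<forall>x\<in>X. b \<le> ereal (f x)) \<longleftrightarrow> (\<exists>B. \<forall>x\<in>X. B \<le> f x)"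
  proof
    assume "\<exists>b>-\<infinity>. \<forall>x\<in>X. b \<le> ereal (f x)"
    then obtain b where b: "b > -\<infinity>" "\<forall>x\<in>X. b \<le> ereal (f x)" by blast
    then show "\<exists>B. \<forall>x\<in>X. B \<le> f x"
      by (cases b) (auto intro: exI[of _ 0])
  next
    assume "\<exists>B. \<forall>x\<in>X. B \<le> f x"
    then obtain B where "\<forall>x\<in>X. B \<le> f x" by blast
    then show "\<exists>b>-\<infinity>. \<forall>x\<in>X. b \<le> ereal (f x)" by (intro exI[of _ "ereal B"]) auto
  qed
  then have "(INF x\<in>X. ereal (f x)) \<noteq> -\<infinity> \<longleftrightarrow> (\<exists>B. \<forall>x\<in>X. B \<le> f x)"
    by (simp add: INF_eq_minf)
  then show ?thesis by (meson not_le)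
qed

lemma exists_sign_with_negative_entry:
  fixes z :: "'e \<Rightarrow> real"
  assumes "z \<noteq> (\<lambda>_. 0)"
  obtains s :: real where "s \<noteq> 0" "\<exists>e. s * z e < 0"
proof -
  obtain e where "z e \<noteq> 0" using assms by auto
  then show ?thesis
    using that[of 1] that[of "-1"] by (cases "z e < 0") (auto simp: not_less order_le_less)
qed

lemma lp_shrink_support_along_kernel:
  assumes "finite E" "y \<in> lp_polyhedron E I M (\<lambda>_. 0)"
    and z: "z \<in> lp_kernel E I M" "z \<noteq> (\<lambda>_. 0)" "inner_on E w z = 0" "support z \<subseteq> support y"
  shows "\<exists>y'\<in>lp_polyhedron E I M (\<lambda>_. 0). inner_on E w y' = inner_on E w y
           \<and> card (support y') < card (support y)"
proof -
  have "support y \<subseteq> E"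
    using assms(2) by (intro support_subset_if_vanishing) (simp add: lp_polyhedron_def)
  then have fin: "finite (support y)" using \<open>finite E\<close> finite_subset by blast
  obtain s e0 where s: "s \<noteq> 0" "s * z e0 < 0"
    using exists_sign_with_negative_entry[OF z(2)] by metis
  define z' where "z' = (\<lambda>e. s * z e)"
  have z': "z' \<in> lp_kernel E I M" "inner_on E w z' = 0" "support z' \<subseteq> support y"
    using lp_kernel_lincomb[OF z(1) z(1), of s 0] inner_on_lincomb[of E w s z 0 z] z(3,4) s(1)
    by (simp_all add: z'_def support_def)
  obtain t where t: "0 \<le> t" "\<forall>e. 0 \<le> y e + t * z' e" "support (\<lambda>e. y e + t * z' e) \<subset> support y"
    using ratio_test[of y z' e0, OF fin _ z'(3)] lp_polyhedron_nonneg[OF assms(2)] s(2)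
    by (auto simp: z'_def)
  have "(\<lambda>e. y e + t * z' e) \<in> lp_polyhedron E I M (\<lambda>_. 0)"
    using lp_polyhedron_add_kernel[OF assms(2) z'(1) t(2)] .
  moreover have "inner_on E w (\<lambda>e. y e + t * z' e) = inner_on E w y"
    using inner_on_add_scaled[of E w y t z'] z'(2) by simp
  moreover have "card (support (\<lambda>e. y e + t * z' e)) < card (support y)"
    using psubset_card_mono[OF fin t(3)] .
  ultimately show ?thesis by blast
qed

text \<open>If z were not improving, a suitable combination of y and z would be a kernel element
  with zero objective inside the support of y but nonzero on the support of z.\<close>
lemma lp_support_minimal_improving_ray:
  assumes "finite E" "z0 \<in> lp_polyhedron E I M (\<lambda>_. 0)" "inner_on E w z0 < 0"
  obtains y where "y \<in> lp_polyhedron E I M (\<lambda>_. 0)" "inner_on E w y < 0"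
    "\<And>z. z \<in> lp_polyhedron E I M (\<lambda>_. 0) \<Longrightarrow> z \<noteq> (\<lambda>_. 0) \<Longrightarrow> support z \<subseteq> support y
       \<Longrightarrow> inner_on E w z < 0"
proof -
  let ?C = "lp_polyhedron E I M (\<lambda>_. 0)"
  obtain y where y: "y \<in> ?C" "inner_on E w y < 0"
    and y_min: "\<And>y'. y' \<in> ?C \<Longrightarrow> inner_on E w y' < 0 \<Longrightarrow> card (support y) \<le> card (support y')"
    using ex_has_least_nat[of "\<lambda>y. y \<in> ?C \<and> inner_on E w y < 0" z0 "\<lambda>y. card (support y)"] assms(2,3)
    by blast
  have "inner_on E w z < 0"
    if z: "z \<in> ?C" "z \<noteq> (\<lambda>_. 0)" "support z \<subseteq> support y" for z
  proof (rule ccontr)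
    assume "\<not> inner_on E w z < 0"
    define d where "d = (\<lambda>e. inner_on E w z * y e + (- inner_on E w y) * z e)"
    have "d \<in> lp_kernel E I M"
      unfolding d_def using lp_kernel_lincomb y(1) z(1) lp_cone_subset_kernel by blast
    moreover have "inner_on E w d = 0"
      unfolding d_def inner_on_lincomb by simp
    moreover have "support d \<subseteq> support y"
      using z(3) by (auto simp: d_def support_def)
    moreover have "d \<noteq> (\<lambda>_. 0)"
    proof -
      obtain e where "z e \<noteq> 0" using z(2) by auto
      then have "0 < z e" using lp_polyhedron_nonneg[OF z(1), of e] by simp
      then have "0 < d e"
        using \<open>\<not> inner_on E w z < 0\<close> y(2) lp_polyhedron_nonneg[OF y(1), of e]
        unfolding d_def by (intro add_nonneg_pos mult_nonneg_nonneg mult_pos_pos) auto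
      then show ?thesis by auto
    qed
    ultimately obtain y' where "y' \<in> ?C" "inner_on E w y' = inner_on E w y"
      "card (support y') < card (support y)"
      using lp_shrink_support_along_kernel[OF assms(1) y(1)] by blast
    then show False using y_min[of y'] y(2) by simp
  qed
  with y that show ?thesis by blast
qed

section \<open>Walks, paths and cycles\<close>

lemma walk_append:
  "walk tail head A v (xs @ ys) w \<longleftrightarrow> (\<exists>m. walk tail head A v xs m \<and> walk tail head A m ys w)"
  by (induction xs arbitrary: v) auto

lemma walk_mono: "walk tail head A v W w \<Longrightarrow> A \<subseteq> B \<Longrightarrow> walk tail head B v W w"
  by (induction W arbitrary: v) auto

lemma walk_arcs_subset: "walk tail head A v W w \<Longrightarrow> set W \<subseteq> A"
  by (induction W arbitrary: v) auto

lemma walk_last_node: "walk tail head A v W w \<Longrightarrow> last (walk_nodes head v W) = w"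
  by (induction W arbitrary: v) (auto simp: walk_nodes_def)

lemma walk_map_tail: "walk tail head A v W w \<Longrightarrow> map tail W = butlast (walk_nodes head v W)"
  by (induction W arbitrary: v) (auto simp: walk_nodes_def)

lemma walk_closed_target:
  "walk tail head A v W w \<Longrightarrow> v \<in> X \<Longrightarrow> \<forall>e\<in>A. head e \<in> X \<Longrightarrow> w \<in> X"
  by (induction W arbitrary: v) auto

lemma walk_nodes_Cons: "walk_nodes head v (e # es) = v # walk_nodes head (head e) es"
  by (simp add: walk_nodes_def)

lemma walk_nodes_append: "walk_nodes head v (xs @ ys) = walk_nodes head v xs @ map head ys"
  by (simp add: walk_nodes_def)

lemma is_path_Nil: "is_path tail head A v [] v"
  by (simp add: is_path_def walk_nodes_def)

lemma is_path_mono: "is_path tail head A v P w \<Longrightarrow> A \<subseteq> B \<Longrightarrow> is_path tail head B v P w"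
  using walk_mono by (fastforce simp: is_path_def)

lemma is_cycle_mono: "is_cycle tail head A v C \<Longrightarrow> A \<subseteq> B \<Longrightarrow> is_cycle tail head B v C"
  using walk_mono by (fastforce simp: is_cycle_def)

lemma is_path_distinct_arcs: "is_path tail head A v P w \<Longrightarrow> distinct P"
  by (auto simp: is_path_def walk_nodes_def distinct_map)

lemma is_cycle_distinct_arcs: "is_cycle tail head A v C \<Longrightarrow> distinct C"
  unfolding is_cycle_def using walk_map_tail distinct_map by metis

lemma is_cycle_first_arc:
  assumes "is_cycle tail head A v C"
  obtains e es where "C = e # es" "e \<in> A" "tail e = v"
  using assms by (cases C) (auto simp: is_cycle_def)

lemma is_path_split:
  assumes "is_path tail head A v P w" "x \<in> set (walk_nodes head v P)"
  shows "\<exists>P1 P2. P = P1 @ P2 \<and> is_path tail head A v P1 x \<and> is_path tail head A x P2 w"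
  using assms
proof (induction P arbitrary: v)
  case Nil
  then show ?case by (auto simp: is_path_def walk_nodes_def)
next
  case (Cons e es)
  show ?case
  proof (cases "x = v")
    case True
    then show ?thesis using Cons.prems(1) is_path_Nil by fastforce
  next
    case False
    have es: "is_path tail head A (head e) es w" and v: "v \<notin> set (walk_nodes head (head e) es)"
      and e: "e \<in> A" "tail e = v"
      using Cons.prems(1) by (auto simp: is_path_def walk_nodes_Cons)
    have "x \<in> set (walk_nodes head (head e) es)"
      using Cons.prems(2) False by (simp add: walk_nodes_Cons)
    then obtain Q1 Q2 where Q: "es = Q1 @ Q2" "is_path tail head A (head e) Q1 x"
      "is_path tail head A x Q2 w"
      using Cons.IH[OF es] by blast
    have "v \<notin> set (walk_nodes head (head e) Q1)" using v Q(1) by (auto simp: walk_nodes_append)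
    then have "is_path tail head A v (e # Q1) x"
      using Q(2) e by (auto simp: is_path_def walk_nodes_Cons)
    then show ?thesis using Q by (intro exI[of _ "e # Q1"] exI[of _ Q2]) simp
  qed
qed

lemma walk_imp_path:
  "walk tail head A v W w \<Longrightarrow> \<exists>P. is_path tail head A v P w"
proof (induction W arbitrary: v)
  case Nil
  then show ?case using is_path_Nil by fastforce
next
  case (Cons e es)
  then obtain P where P: "is_path tail head A (head e) P w" and e: "e \<in> A" "tail e = v" by auto
  show ?case
  proof (cases "v \<in> set (walk_nodes head (head e) P)")
    case True
    then show ?thesis using is_path_split[OF P] by blast
  next
    case False
    then have "is_path tail head A v (e # P) w"
      using P e by (auto simp: is_path_def walk_nodes_Cons)
    then show ?thesis ..
  qed
qed

lemma is_cycle_Cons_path: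
  assumes "e \<in> A" "is_path tail head A (head e) P (tail e)"
  shows "is_cycle tail head A (tail e) (e # P)"
proof -
  let ?ns = "walk_nodes head (head e) P"
  have w: "walk tail head A (head e) P (tail e)" and d: "distinct ?ns"
    using assms(2) by (auto simp: is_path_def)
  have "?ns \<noteq> []" by (simp add: walk_nodes_def)
  then have "tail e \<notin> set (butlast ?ns)"
    using d walk_last_node[OF w] by (metis append_butlast_last_id distinct_append disjoint_iff
        list.set_intros(1))
  moreover have "distinct (butlast ?ns)" using d distinct_butlast by blast
  ultimately have "distinct (butlast (walk_nodes head (tail e) (e # P)))"
    using \<open>?ns \<noteq> []\<close> by (simp add: walk_nodes_Cons)
  then show ?thesis using assms(1) w by (simp add: is_cycle_def)
qed

lemma wgain_append: "wgain \<gamma> (xs @ ys) = wgain \<gamma> xs * wgain \<gamma> ys"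
  by (induction xs) auto

lemma wgain_pos: "\<forall>e\<in>set W. 0 < \<gamma> e \<Longrightarrow> 0 < wgain \<gamma> W"
  by (induction W) auto

lemma wgain_divide: "wgain (\<lambda>e. \<gamma> e / \<theta>) W = wgain \<gamma> W / \<theta> ^ length W"
  by (induction W) auto

lemma wgain_inverse: "wgain (\<lambda>e. 1 / \<gamma> e) W = 1 / wgain \<gamma> W"
  by (induction W) auto

lemma is_cycle_arcs_subset: "is_cycle tail head T v C \<Longrightarrow> set C \<subseteq> T"
  unfolding is_cycle_def using walk_arcs_subset by metis

lemma is_path_arcs_subset: "is_path tail head T v P w \<Longrightarrow> set P \<subseteq> T"
  unfolding is_path_def using walk_arcs_subset by metis

section \<open>Node potentials\<close>

lemma finite_cycles: "finite T \<Longrightarrow> finite {C. \<exists>v. is_cycle tail head T v C}"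
  by (rule finite_subset[OF _ finite_subset_distinct[of T]])
    (auto dest: is_cycle_distinct_arcs is_cycle_arcs_subset)

lemma finite_paths_from: "finite T \<Longrightarrow> finite {P. \<exists>y. is_path tail head T x P y}"
  by (rule finite_subset[OF _ finite_subset_distinct[of T]])
    (auto dest: is_path_distinct_arcs is_path_arcs_subset)

lemma is_cycle_length_le_card:
  assumes "finite T" "is_cycle tail head T v C"
  shows "length C \<le> card T"
proof -
  have "length C = card (set C)"
    using is_cycle_distinct_arcs[OF assms(2)] by (simp add: distinct_card)
  also have "\<dots> \<le> card T"
    using card_mono[OF assms(1) is_cycle_arcs_subset[OF assms(2)]] .
  finally show ?thesis .
qed

lemma absorbing_cycles_uniform_slack:
  assumes fin: "finite T" and absorbing: "\<forall>v C. is_cycle tail head T v C \<longrightarrow> wgain \<gamma> C < 1"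
  shows "\<exists>\<theta>. 0 < \<theta> \<and> \<theta> < 1 \<and> (\<forall>v C. is_cycle tail head T v C \<longrightarrow> wgain \<gamma> C < \<theta> ^ length C)"
proof -
  let ?G = "wgain \<gamma> ` {C. \<exists>v. is_cycle tail head T v C}"
  define m where "m = Max (insert 0 ?G)"
  have finG: "finite ?G" using finite_cycles[OF fin] by blast
  have m: "0 \<le> m" "m < 1" "\<And>v C. is_cycle tail head T v C \<Longrightarrow> wgain \<gamma> C \<le> m"
    using finG absorbing by (auto simp: m_def intro!: Max_ge)
  define N where "N = Suc (card T)"
  define \<theta> where "\<theta> = root N ((1 + m) / 2)"
  have \<theta>N: "\<theta> ^ N = (1 + m) / 2"
    unfolding \<theta>_def using m(1) by (intro real_root_pow_pos) (auto simp: N_def)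
  have \<theta>: "0 < \<theta>" "\<theta> < 1" using m by (simp_all add: \<theta>_def N_def)
  have "wgain \<gamma> C < \<theta> ^ length C" if C: "is_cycle tail head T v C" for v C
  proof -
    have "length C \<le> N" using is_cycle_length_le_card[OF fin C] by (simp add: N_def)
    then have "\<theta> ^ N \<le> \<theta> ^ length C" using \<theta> by (intro power_decreasing) auto
    moreover have "m < (1 + m) / 2" using m(2) by simp
    ultimately show ?thesis using m(3)[OF C] \<theta>N by simp
  qed
  with \<theta> show ?thesis by blast
qed

text \<open>Bellman's argument: the largest gain of a path leaving a node is a potential, because
  a maximal path from the head of an arc either extends to a path from its tail or closes an
  absorbing cycle with it.\<close>
lemma bellman_potential:
  assumes fin: "finite T" and pos: "\<forall>e\<in>T. 0 < \<gamma> e"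
    and absorbing: "\<forall>v C. is_cycle tail head T v C \<longrightarrow> wgain \<gamma> C < 1"
  shows "\<exists>p. (\<forall>x. 1 \<le> p x) \<and> (\<forall>e\<in>T. \<gamma> e * p (head e) \<le> p (tail e))"
proof -
  define p where "p x = Max (wgain \<gamma> ` {P. \<exists>y. is_path tail head T x P y})" for x
  have fin_gains: "finite (wgain \<gamma> ` {P. \<exists>y. is_path tail head T x P y})" for x
    using finite_paths_from[OF fin, of tail head x] by (rule finite_imageI)
  have p_ge: "wgain \<gamma> P \<le> p x" if "is_path tail head T x P y" for x P y
    unfolding p_def using fin_gains that by (intro Max_ge) auto
  have p_attained: "\<exists>P y. is_path tail head T x P y \<and> p x = wgain \<gamma> P" for x
  proof -
    have "p x \<in> wgain \<gamma> ` {P. \<exists>y. is_path tail head T x P y}"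
      unfolding p_def using is_path_Nil[of tail head T x] by (intro Max_in fin_gains) blast
    then show ?thesis by blast
  qed
  have "\<gamma> e * p (head e) \<le> p (tail e)" if e: "e \<in> T" for e
  proof -
    obtain P y where P: "is_path tail head T (head e) P y" and pP: "p (head e) = wgain \<gamma> P"
      using p_attained by blast
    show ?thesis
    proof (cases "tail e \<in> set (walk_nodes head (head e) P)")
      case True
      then obtain P1 P2 where P12: "P = P1 @ P2" "is_path tail head T (head e) P1 (tail e)"
        "is_path tail head T (tail e) P2 y"
        using is_path_split[OF P] by blast
      have "wgain \<gamma> (e # P1) < 1"
        using absorbing is_cycle_Cons_path[OF e P12(2)] by blast
      moreover have "0 < wgain \<gamma> P2"
        using is_path_arcs_subset[OF P12(3)] pos by (intro wgain_pos) auto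
      ultimately have "\<gamma> e * p (head e) \<le> wgain \<gamma> P2"
        using pP P12(1) by (simp add: wgain_append mult.assoc[symmetric])
      then show ?thesis using p_ge[OF P12(3)] by linarith
    next
      case False
      then have "is_path tail head T (tail e) (e # P) y"
        using P e by (auto simp: is_path_def walk_nodes_Cons)
      then show ?thesis using p_ge[of "tail e" "e # P" y] pP by simp
    qed
  qed
  moreover have "1 \<le> p x" for x using p_ge[OF is_path_Nil] by simp
  ultimately show ?thesis by blast
qed

lemma potential_of_absorbing_cycles:
  assumes fin: "finite T" and pos: "\<forall>e\<in>T. 0 < \<gamma> e"
    and absorbing: "\<forall>v C. is_cycle tail head T v C \<longrightarrow> wgain \<gamma> C < 1"
  shows "\<exists>p. (\<forall>x. 0 < p x) \<and> (\<forall>e\<in>T. \<gamma> e * p (head e) < p (tail e))"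
proof -
  obtain \<theta> where \<theta>: "0 < \<theta>" "\<theta> < 1"
    and slack: "\<forall>v C. is_cycle tail head T v C \<longrightarrow> wgain \<gamma> C < \<theta> ^ length C"
    using absorbing_cycles_uniform_slack[OF fin absorbing] by blast
  have "\<forall>v C. is_cycle tail head T v C \<longrightarrow> wgain (\<lambda>e. \<gamma> e / \<theta>) C < 1"
    using slack \<theta>(1) by (simp add: wgain_divide)
  moreover have "\<forall>e\<in>T. 0 < \<gamma> e / \<theta>" using pos \<theta>(1) by simp
  ultimately obtain p where p: "\<forall>x. 1 \<le> p x" "\<forall>e\<in>T. \<gamma> e / \<theta> * p (head e) \<le> p (tail e)"
    using bellman_potential[OF fin, where \<gamma>="\<lambda>e. \<gamma> e / \<theta>"] by blast
  have "\<gamma> e * p (head e) < p (tail e)" if "e \<in> T" for e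
  proof -
    have "\<gamma> e * p (head e) < \<gamma> e / \<theta> * p (head e)"
      using pos that \<theta> p(1)[rule_format, of "head e"] by (simp add: less_divide_eq)
    then show ?thesis using p(2) that by (meson less_le_trans)
  qed
  moreover have "\<forall>x. 0 < p x" using p(1) by (meson less_le_trans zero_less_one)
  ultimately show ?thesis by blast
qed

lemma potential_of_generating_cycles:
  assumes fin: "finite T" and pos: "\<forall>e\<in>T. 0 < \<gamma> e"
    and generating: "\<forall>v C. is_cycle tail head T v C \<longrightarrow> 1 < wgain \<gamma> C"
  shows "\<exists>q. (\<forall>x. 0 < q x) \<and> (\<forall>e\<in>T. q (tail e) < \<gamma> e * q (head e))"
proof -
  have "\<forall>v C. is_cycle tail head T v C \<longrightarrow> wgain (\<lambda>e. 1 / \<gamma> e) C < 1"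
    using generating by (auto simp: wgain_inverse divide_less_eq_1)
  moreover have "\<forall>e\<in>T. 0 < 1 / \<gamma> e" using pos by simp
  ultimately obtain p where p: "\<forall>x. 0 < p x" "\<forall>e\<in>T. 1 / \<gamma> e * p (head e) < p (tail e)"
    using potential_of_absorbing_cycles[OF fin, where \<gamma>="\<lambda>e. 1 / \<gamma> e"] by blast
  have "1 / p (tail e) < \<gamma> e * (1 / p (head e))" if "e \<in> T" for e
    using p(1) p(2)[rule_format, OF that] pos that by (simp add: field_simps)
  then show ?thesis using p(1) by (intro exI[of _ "\<lambda>x. 1 / p x"]) simp
qed

section \<open>Generalized flows\<close>

text \<open>One unit sent into the first arc of W: the i-th arc carries the product of the gains of the
  arcs before it, so the flow costs wcost and delivers wgain at the end of W.\<close>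
fun walk_flow :: "('e \<Rightarrow> real) \<Rightarrow> 'e list \<Rightarrow> 'e \<Rightarrow> real" where
  "walk_flow \<gamma> [] = (\<lambda>_. 0)"
| "walk_flow \<gamma> (e # es) = (\<lambda>f. (if f = e then 1 else 0) + \<gamma> e * walk_flow \<gamma> es f)"

lemma walk_flow_nonneg: "\<forall>e\<in>set W. 0 \<le> \<gamma> e \<Longrightarrow> 0 \<le> walk_flow \<gamma> W f"
  by (induction W) auto

lemma walk_flow_eq_0: "f \<notin> set W \<Longrightarrow> walk_flow \<gamma> W f = 0"
  by (induction W) auto

lemma walk_flow_first_arc: "\<forall>e\<in>set es. 0 \<le> \<gamma> e \<Longrightarrow> 0 \<le> \<gamma> e \<Longrightarrow> 1 \<le> walk_flow \<gamma> (e # es) e"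
  using walk_flow_nonneg[of es \<gamma> e] by simp

lemma inner_on_indicator: "finite E \<Longrightarrow> e \<in> E \<Longrightarrow> inner_on E w (\<lambda>f. if f = e then 1 else 0) = w e"
  by (simp add: inner_on_def if_distrib cong: if_cong)

lemma inner_on_walk_flow:
  "finite E \<Longrightarrow> set W \<subseteq> E \<Longrightarrow> inner_on E c (walk_flow \<gamma> W) = wcost c \<gamma> W"
proof (induction W)
  case (Cons e es)
  have "walk_flow \<gamma> (e # es) = (\<lambda>f. 1 * (if f = e then 1 else 0) + \<gamma> e * walk_flow \<gamma> es f)"
    by simp
  then have "inner_on E c (walk_flow \<gamma> (e # es))
      = 1 * inner_on E c (\<lambda>f. if f = e then 1 else 0) + \<gamma> e * inner_on E c (walk_flow \<gamma> es)"
    by (simp only: inner_on_lincomb)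
  then show ?case using Cons by (simp add: inner_on_indicator)
qed (simp add: inner_on_def)

locale gain_graph =
  fixes V :: "'v set" and E :: "'e set" and tail head :: "'e \<Rightarrow> 'v" and \<gamma> :: "'e \<Rightarrow> real"
  assumes finite_V: "finite V" and finite_E: "finite E"
    and arc_ends: "\<forall>e\<in>E. tail e \<in> V \<and> head e \<in> V"
    and gain_pos: "\<forall>e\<in>E. 0 < \<gamma> e"
begin

abbreviation net :: "('e \<Rightarrow> real) \<Rightarrow> 'v \<Rightarrow> real" where
  "net x v \<equiv> netflow tail head E \<gamma> x v"

definition outflow :: "('e \<Rightarrow> real) \<Rightarrow> 'v \<Rightarrow> real" where
  "outflow x v = (\<Sum>e\<in>{e\<in>E. tail e = v}. x e)"

definition inflow :: "('e \<Rightarrow> real) \<Rightarrow> 'v \<Rightarrow> real" where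
  "inflow x v = (\<Sum>e\<in>{e\<in>E. head e = v}. \<gamma> e * x e)"

lemma net_eq: "net x v = outflow x v - inflow x v"
  by (simp add: netflow_def outflow_def inflow_def)

lemma inflow_nonneg: "\<forall>e. 0 \<le> x e \<Longrightarrow> 0 \<le> inflow x v"
  using gain_pos by (auto simp: inflow_def intro!: sum_nonneg)

lemma net_as_inner_on:
  "net x v = inner_on E (\<lambda>e. (if tail e = v then 1 else 0) - (if head e = v then \<gamma> e else 0)) x"
  using finite_E
  by (simp add: netflow_def inner_on_def sum.inter_filter left_diff_distrib sum_subtractf
      if_distrib[of "\<lambda>a. a * x _"] cong: if_cong)

lemma net_lincomb: "net (\<lambda>e. a * x e + b * y e) v = a * net x v + b * net y v"
  unfolding net_as_inner_on by (rule inner_on_lincomb)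

lemma net_add_scaled: "net (\<lambda>e. x e + t * y e) v = net x v + t * net y v"
  using net_lincomb[of 1 x t y v] by simp

lemma sum_potential_net:
  "(\<Sum>v\<in>V. p v * net x v) = (\<Sum>e\<in>E. x e * (p (tail e) - \<gamma> e * p (head e)))"
proof -
  have "(\<Sum>v\<in>V. p v * net x v)
      = (\<Sum>v\<in>V. \<Sum>e\<in>E. (if tail e = v then p v * x e else 0) - (if head e = v then p v * \<gamma> e * x e else 0))"
    unfolding net_as_inner_on inner_on_def sum_distrib_left
    by (intro sum.cong refl) (simp add: algebra_simps)
  also have "\<dots> = (\<Sum>e\<in>E. \<Sum>v\<in>V. (if tail e = v then p v * x e else 0) - (if head e = v then p v * \<gamma> e * x e else 0))"
    by (rule sum.swap)
  also have "\<dots> = (\<Sum>e\<in>E. x e * (p (tail e) - \<gamma> e * p (head e)))"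
    using finite_V arc_ends by (intro sum.cong refl) (simp add: sum_subtractf sum.delta' algebra_simps)
  finally show ?thesis .
qed

lemma net_walk_flow:
  "walk tail head E a W b \<Longrightarrow>
     net (walk_flow \<gamma> W) x = (if x = a then 1 else 0) - wgain \<gamma> W * (if x = b then 1 else 0)"
proof (induction W arbitrary: a)
  case Nil
  then show ?case by (simp add: netflow_def)
next
  case (Cons e es)
  then have e: "e \<in> E" "tail e = a" and es: "walk tail head E (head e) es b" by auto
  have "walk_flow \<gamma> (e # es) = (\<lambda>f. 1 * (if f = e then 1 else 0) + \<gamma> e * walk_flow \<gamma> es f)"
    by simp
  moreover have "net (\<lambda>f. if f = e then 1 else 0) x
      = (if x = a then 1 else 0) - \<gamma> e * (if x = head e then 1 else 0)"
    using e finite_E by (auto simp: net_as_inner_on inner_on_indicator)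
  ultimately show ?case
    using Cons.IH[OF es] by (simp only: net_lincomb) (simp add: algebra_simps)
qed

end

section \<open>The polyhedron D and its recession cone\<close>

locale rooted_gain_graph = gain_graph V E tail head \<gamma>
  for V :: "'v set" and E :: "'e set" and tail head :: "'e \<Rightarrow> 'v" and \<gamma> :: "'e \<Rightarrow> real" +
  fixes u :: 'v and c :: "'e \<Rightarrow> real" and \<delta> :: real
  assumes root_in_V: "u \<in> V"
begin

abbreviation nonroot_arcs :: "'e set" where
  "nonroot_arcs \<equiv> {e\<in>E. tail e \<noteq> u}"

text \<open>Row u of the constraint matrix is the outflow of u, every other row v is the net flow at v.\<close>
definition constraint_coeff :: "'v \<Rightarrow> 'e \<Rightarrow> real" where
  "constraint_coeff v e = (if tail e = v then 1 else 0) - (if head e = v \<and> v \<noteq> u then \<gamma> e else 0)"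

definition cost_coeff :: "'e \<Rightarrow> real" where
  "cost_coeff e = c e + (if head e = u then \<delta> * \<gamma> e else 0)"

abbreviation objective :: "('e \<Rightarrow> real) \<Rightarrow> real" where
  "objective x \<equiv> inner_on E cost_coeff x"

abbreviation cone :: "('e \<Rightarrow> real) set" where
  "cone \<equiv> lp_polyhedron E V constraint_coeff (\<lambda>_. 0)"

lemma inner_on_constraint_coeff:
  "inner_on E (constraint_coeff v) x = (if v = u then outflow x u else net x v)"
  using finite_E
  by (auto simp: constraint_coeff_def net_as_inner_on outflow_def inner_on_def sum.inter_filter
      if_distrib[of "\<lambda>a. a * x _"] cong: if_cong)

lemma objective_eq: "objective x = inner_on E c x + \<delta> * inflow x u"
  using finite_E
  by (simp add: cost_coeff_def inner_on_def inflow_def sum.distrib distrib_right sum_distrib_left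
      sum.inter_filter if_distrib[of "\<lambda>a. a * x _"] if_distrib[of "(*) \<delta>"] mult.assoc cong: if_cong)

lemma Dset_eq: "Dset V E tail head \<gamma> u = lp_polyhedron E V constraint_coeff (\<lambda>v. if v = u then 1 else 0)"
  using root_in_V by (auto simp: Dset_def lp_polyhedron_def inner_on_constraint_coeff outflow_def)

lemma fval_eq: "fval V E tail head c \<gamma> u \<delta> = (INF x\<in>Dset V E tail head \<gamma> u. ereal (objective x - \<delta>))"
  unfolding fval_def objective_eq by (simp add: inner_on_def inflow_def)

lemma in_cone_iff:
  "z \<in> cone \<longleftrightarrow> (\<forall>e. e \<notin> E \<longrightarrow> z e = 0) \<and> (\<forall>e\<in>E. 0 \<le> z e) \<and> outflow z u = 0
     \<and> (\<forall>v\<in>V - {u}. net z v = 0)"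
  using root_in_V by (auto simp: lp_polyhedron_def inner_on_constraint_coeff)

lemma cone_support_nonroot:
  assumes "z \<in> cone"
  shows "support z \<subseteq> nonroot_arcs"
proof
  fix e assume e: "e \<in> support z"
  have "\<forall>f\<in>{f\<in>E. tail f = u}. z f = 0"
    using assms finite_E by (subst sum_nonneg_eq_0_iff[symmetric]) (auto simp: in_cone_iff outflow_def)
  moreover have "e \<in> E" using assms e by (auto simp: in_cone_iff support_def)
  ultimately show "e \<in> nonroot_arcs" using e by (auto simp: support_def)
qed

lemma in_cone_if_supported_off_root:
  assumes "\<forall>e. 0 \<le> z e" "support z \<subseteq> nonroot_arcs" "\<forall>v\<in>V - {u}. net z v = 0"
  shows "z \<in> cone"
proof -
  have "outflow z u = 0"
    using assms(2) by (auto simp: outflow_def support_def intro!: sum.neutral)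
  then show ?thesis using assms by (auto simp: in_cone_iff support_def)
qed

lemma inflow_root_if_supported_off_root:
  "support z \<subseteq> nonroot_arcs \<Longrightarrow> inflow z u = - net z u"
  by (auto simp: net_eq outflow_def support_def intro!: sum.neutral)

text \<open>The flow around C leaves the excess a at v; the flow along P carries it to w, where the
  flow around D absorbs it unless w = u.\<close>
lemma walk_flow_combination:
  assumes S: "S \<subseteq> nonroot_arcs"
    and C: "walk tail head S v C v" "C \<noteq> []"
    and P: "walk tail head S v P w" and D: "walk tail head S w D w"
    and ab: "0 \<le> a" "0 \<le> b"
    and balance_v: "wgain \<gamma> C = 1 + a"
    and balance_w: "w \<noteq> u \<Longrightarrow> b * (1 - wgain \<gamma> D) = a * wgain \<gamma> P"
  defines "z \<equiv> \<lambda>f. walk_flow \<gamma> C f + a * walk_flow \<gamma> P f + b * walk_flow \<gamma> D f"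
  shows "z \<in> cone" "z \<noteq> (\<lambda>_. 0)" "support z \<subseteq> S"
    and "objective z = wcost c \<gamma> C + a * wcost c \<gamma> P + b * wcost c \<gamma> D
           + \<delta> * (if w = u then a * wgain \<gamma> P - b * (1 - wgain \<gamma> D) else 0)"
proof -
  have SE: "S \<subseteq> E" using S by auto
  have arcs: "set C \<subseteq> S" "set P \<subseteq> S" "set D \<subseteq> S"
    using C P D walk_arcs_subset by metis+
  have CPD: "walk tail head E v C v" "walk tail head E v P w" "walk tail head E w D w"
    using C P D SE walk_mono by metis+
  have flow_nonneg: "0 \<le> walk_flow \<gamma> W f" if "set W \<subseteq> S" for W f
    using that SE gain_pos by (intro walk_flow_nonneg) (auto intro: less_imp_le)
  have nonneg: "\<forall>f. 0 \<le> z f"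
    using flow_nonneg[OF arcs(1)] flow_nonneg[OF arcs(2)] flow_nonneg[OF arcs(3)] ab
    by (simp add: z_def)
  obtain e es where e: "C = e # es" using C(2) by (cases C) auto
  have "1 \<le> walk_flow \<gamma> C e"
    unfolding e using arcs(1) SE gain_pos e by (intro walk_flow_first_arc) (auto intro: less_imp_le)
  moreover have "walk_flow \<gamma> C e \<le> z e"
    using flow_nonneg[OF arcs(2)] flow_nonneg[OF arcs(3)] ab by (simp add: z_def)
  ultimately show "z \<noteq> (\<lambda>_. 0)" by (metis not_one_le_zero order_trans)
  have "z f = 0" if "f \<notin> set C \<union> set P \<union> set D" for f
    using that by (simp add: z_def walk_flow_eq_0)
  then have "support z \<subseteq> set C \<union> set P \<union> set D"
    by (auto simp: support_def)
  then show supp: "support z \<subseteq> S" using arcs by blast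
  have net: "net z x = (if x = w then b * (1 - wgain \<gamma> D) - a * wgain \<gamma> P else 0)" for x
    unfolding z_def net_add_scaled net_walk_flow[OF CPD(1)] net_walk_flow[OF CPD(2)]
      net_walk_flow[OF CPD(3)]
    using balance_v by (simp add: algebra_simps)
  then show "z \<in> cone"
    using in_cone_if_supported_off_root nonneg supp S balance_w by force
  have "inner_on E c z = wcost c \<gamma> C + a * wcost c \<gamma> P + b * wcost c \<gamma> D"
    unfolding z_def inner_on_add_scaled using arcs SE finite_E
    by (simp add: inner_on_walk_flow subset_trans[OF _ SE])
  then show "objective z = wcost c \<gamma> C + a * wcost c \<gamma> P + b * wcost c \<gamma> D
           + \<delta> * (if w = u then a * wgain \<gamma> P - b * (1 - wgain \<gamma> D) else 0)"
    using inflow_root_if_supported_off_root supp S net[of u] by (simp add: objective_eq algebra_simps)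
qed

lemma is_cycle_nonroot: "is_cycle tail head S v C \<Longrightarrow> S \<subseteq> nonroot_arcs \<Longrightarrow> v \<noteq> u"
  by (auto elim: is_cycle_first_arc)

lemma unit_gain_cycle_ray:
  assumes S: "S \<subseteq> nonroot_arcs" and C: "is_cycle tail head S v C" "wgain \<gamma> C = 1"
  shows "\<exists>z\<in>cone. z \<noteq> (\<lambda>_. 0) \<and> support z \<subseteq> S \<and> (objective z < 0 \<longleftrightarrow> wcost c \<gamma> C < 0)"
proof -
  have W: "walk tail head S v C v" "C \<noteq> []" using C(1) by (auto simp: is_cycle_def)
  have "walk tail head S v [] v" by simp
  note comb = walk_flow_combination[OF S W this this order_refl order_refl, simplified]
  show ?thesis using comb C(2) is_cycle_nonroot[OF C(1) S] by auto
qed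

lemma root_path_ray:
  assumes S: "S \<subseteq> nonroot_arcs" and C: "is_cycle tail head S v C" "1 < wgain \<gamma> C"
    and P: "is_path tail head S v P u"
  shows "\<exists>z\<in>cone. z \<noteq> (\<lambda>_. 0) \<and> support z \<subseteq> S
    \<and> (objective z < 0 \<longleftrightarrow> wcost c \<gamma> C + (wgain \<gamma> C - 1) * (wcost c \<gamma> P + wgain \<gamma> P * \<delta>) < 0)"
proof -
  have W: "walk tail head S v C v" "C \<noteq> []" using C(1) by (auto simp: is_cycle_def)
  have PW: "walk tail head S v P u" using P by (simp add: is_path_def)
  have D: "walk tail head S u [] u" by simp
  have a: "0 \<le> wgain \<gamma> C - 1" using C(2) by simp
  note comb = walk_flow_combination[OF S W PW D a order_refl]
  show ?thesis using comb by (intro bexI) (auto simp: algebra_simps)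
qed

lemma bicycle_ray:
  assumes S: "S \<subseteq> nonroot_arcs" and C: "is_cycle tail head S v C" "1 < wgain \<gamma> C"
    and D: "is_cycle tail head S w D" "wgain \<gamma> D < 1" and P: "is_path tail head S v P w"
  shows "\<exists>z\<in>cone. z \<noteq> (\<lambda>_. 0) \<and> support z \<subseteq> S
    \<and> (objective z < 0 \<longleftrightarrow>
         wcost c \<gamma> P + wgain \<gamma> P * (wcost c \<gamma> D / (1 - wgain \<gamma> D)) < - wcost c \<gamma> C / (wgain \<gamma> C - 1))"
proof -
  have W: "walk tail head S v C v" "C \<noteq> []" using C(1) by (auto simp: is_cycle_def)
  have DW: "walk tail head S w D w" using D(1) by (auto simp: is_cycle_def)
  have PW: "walk tail head S v P w" using P by (simp add: is_path_def)
  have "0 < wgain \<gamma> P"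
    using is_path_arcs_subset[OF P] S gain_pos by (intro wgain_pos) auto
  define a where "a = wgain \<gamma> C - 1"
  define b where "b = a * wgain \<gamma> P / (1 - wgain \<gamma> D)"
  have ab: "0 < a" "0 \<le> b" using C(2) D(2) \<open>0 < wgain \<gamma> P\<close> by (simp_all add: a_def b_def)
  have "b * (1 - wgain \<gamma> D) = a * wgain \<gamma> P" using D(2) by (simp add: b_def)
  note comb = walk_flow_combination[OF S W PW DW less_imp_le[OF ab(1)] ab(2) _ this]
  have "wcost c \<gamma> C + a * wcost c \<gamma> P + b * wcost c \<gamma> D
      = a * (wcost c \<gamma> P + wgain \<gamma> P * (wcost c \<gamma> D / (1 - wgain \<gamma> D)) + wcost c \<gamma> C / a)"
    using ab(1) by (simp add: b_def distrib_left)
  also have "\<dots> < 0 \<longleftrightarrow>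
      wcost c \<gamma> P + wgain \<gamma> P * (wcost c \<gamma> D / (1 - wgain \<gamma> D)) < - wcost c \<gamma> C / a"
    using ab(1) by (auto simp: mult_less_0_iff)
  finally show ?thesis
    using comb is_cycle_nonroot[OF D(1) S] by (intro bexI) (auto simp: a_def)
qed

lemma support_has_nonabsorbing_cycle:
  assumes y: "y \<in> cone" "y \<noteq> (\<lambda>_. 0)"
  shows "\<exists>v C. is_cycle tail head (support y) v C \<and> 1 \<le> wgain \<gamma> C"
proof (rule ccontr)
  assume "\<not> ?thesis"
  then have absorbing: "\<forall>v C. is_cycle tail head (support y) v C \<longrightarrow> wgain \<gamma> C < 1"
    by (auto simp: not_le)
  have supp: "support y \<subseteq> E" using cone_support_nonroot[OF y(1)] by blast
  then obtain p where p: "\<forall>x. 0 < p x" "\<forall>e\<in>support y. \<gamma> e * p (head e) < p (tail e)"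
    using potential_of_absorbing_cycles[OF finite_subset[OF supp finite_E] _ absorbing] gain_pos
    by blast
  have "(\<Sum>v\<in>V. p v * net y v) = p u * net y u"
    using y(1) finite_V root_in_V by (subst sum.remove) (auto simp: in_cone_iff)
  also have "\<dots> = - (p u * inflow y u)"
    using y(1) by (simp add: net_eq in_cone_iff)
  also have "\<dots> \<le> 0"
    using p(1) inflow_nonneg lp_polyhedron_nonneg[OF y(1)] by (simp add: less_imp_le)
  finally have "(\<Sum>e\<in>E. y e * (p (tail e) - \<gamma> e * p (head e))) \<le> 0"
    by (simp add: sum_potential_net)
  moreover have "0 < (\<Sum>e\<in>E. y e * (p (tail e) - \<gamma> e * p (head e)))"
  proof -
    obtain e0 where "y e0 \<noteq> 0" using y(2) by auto
    then have e0: "e0 \<in> support y" by (simp add: support_def)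
    have pos: "0 < y e * (p (tail e) - \<gamma> e * p (head e))" if "e \<in> support y" for e
      using that p(2) lp_polyhedron_nonneg[OF y(1), of e] by (simp add: support_def order_le_less)
    show ?thesis
    proof (rule sum_pos2[OF finite_E])
      show "e0 \<in> E" "0 < y e0 * (p (tail e0) - \<gamma> e0 * p (head e0))"
        using e0 supp pos by auto
      show "0 \<le> y e * (p (tail e) - \<gamma> e * p (head e))" for e
        using pos[of e] by (cases "e \<in> support y") (auto simp: support_def)
    qed
  qed
  ultimately show False by simp
qed

lemma closed_support_part_has_nongenerating_cycle:
  assumes y: "y \<in> cone" and R: "R \<subseteq> V" "u \<notin> R"
    and closed: "\<forall>e\<in>support y. tail e \<in> R \<longrightarrow> head e \<in> R"
    and e1: "e1 \<in> support y" "tail e1 \<in> R"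
  shows "\<exists>w D. is_cycle tail head {e\<in>support y. tail e \<in> R} w D \<and> wgain \<gamma> D \<le> 1"
proof (rule ccontr)
  let ?T = "{e\<in>support y. tail e \<in> R}"
  assume "\<not> ?thesis"
  then have generating: "\<forall>w D. is_cycle tail head ?T w D \<longrightarrow> 1 < wgain \<gamma> D"
    by (auto simp: not_le)
  have supp: "support y \<subseteq> E" using cone_support_nonroot[OF y] by blast
  have "finite ?T" using finite_subset[OF supp finite_E] by simp
  then obtain q where q: "\<forall>x. 0 < q x" "\<forall>e\<in>?T. q (tail e) < \<gamma> e * q (head e)"
    using potential_of_generating_cycles[OF _ _ generating] gain_pos supp by blast
  define q' where "q' x = (if x \<in> R then q x else 0)" for x
  have "(\<Sum>v\<in>V. q' v * net y v) = 0"
    using y R by (intro sum.neutral) (auto simp: q'_def in_cone_iff)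
  then have "(\<Sum>e\<in>E. y e * (q' (tail e) - \<gamma> e * q' (head e))) = 0"
    by (simp add: sum_potential_net)
  moreover have "0 < (\<Sum>e\<in>E. y e * (\<gamma> e * q' (head e) - q' (tail e)))"
  proof (rule sum_pos2[OF finite_E])
    have "0 < y e1" using e1(1) lp_polyhedron_nonneg[OF y, of e1] by (simp add: support_def)
    then show "e1 \<in> E" "0 < y e1 * (\<gamma> e1 * q' (head e1) - q' (tail e1))"
      using e1 q(2) closed supp by (auto simp: q'_def)
  next
    fix e assume "e \<in> E"
    show "0 \<le> y e * (\<gamma> e * q' (head e) - q' (tail e))"
    proof (cases "e \<in> support y \<and> tail e \<in> R")
      case True
      then have "q (tail e) < \<gamma> e * q (head e)" "head e \<in> R" using q(2) closed by auto
      then show ?thesis using True lp_polyhedron_nonneg[OF y, of e] by (simp add: q'_def)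
    next
      case False
      have "0 \<le> \<gamma> e * q' (head e)"
        using \<open>e \<in> E\<close> gain_pos q(1) by (simp add: q'_def less_imp_le)
      then show ?thesis
        using False lp_polyhedron_nonneg[OF y, of e] by (auto simp: support_def q'_def)
    qed
  qed
  moreover have "(\<Sum>e\<in>E. y e * (\<gamma> e * q' (head e) - q' (tail e)))
      = - (\<Sum>e\<in>E. y e * (q' (tail e) - \<gamma> e * q' (head e)))"
    by (simp add: sum_negf[symmetric] algebra_simps)
  ultimately show False by linarith
qed

lemma reaches_root_or_nongenerating_cycle:
  assumes y: "y \<in> cone" and C: "is_cycle tail head (support y) v C"
  shows "(\<exists>P. is_path tail head (support y) v P u)
    \<or> (\<exists>w D P. is_cycle tail head (support y) w D \<and> wgain \<gamma> D \<le> 1 \<and> is_path tail head (support y) v P w)"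
proof -
  let ?S = "support y"
  define R where "R = {x. \<exists>W. walk tail head ?S v W x}"
  have path_to: "\<exists>P. is_path tail head ?S v P x" if "x \<in> R" for x
    using that walk_imp_path by (auto simp: R_def)
  obtain e1 es1 where e1: "C = e1 # es1" "e1 \<in> ?S" "tail e1 = v"
    using C by (rule is_cycle_first_arc)
  have SE: "?S \<subseteq> E" using cone_support_nonroot[OF y] by blast
  show ?thesis
  proof (cases "u \<in> R")
    case True
    then show ?thesis using path_to by blast
  next
    case False
    have "v \<in> V" using e1 SE arc_ends by auto
    then have "R \<subseteq> V"
      using walk_closed_target[of tail head ?S v _ _ V] SE arc_ends by (auto simp: R_def)
    moreover have "\<forall>e\<in>?S. tail e \<in> R \<longrightarrow> head e \<in> R"
      by (auto simp: R_def) (metis walk_append walk.simps)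
    moreover have "v \<in> R" by (auto simp: R_def intro: exI[of _ "[]"])
    ultimately obtain w D where D: "is_cycle tail head {e\<in>?S. tail e \<in> R} w D" "wgain \<gamma> D \<le> 1"
      using closed_support_part_has_nongenerating_cycle[OF y _ False, of e1] e1 by auto
    obtain f fs where "D = f # fs" "f \<in> {e\<in>?S. tail e \<in> R}" "tail f = w"
      using D(1) by (rule is_cycle_first_arc)
    then obtain P where "is_path tail head ?S v P w" using path_to by blast
    moreover have "is_cycle tail head ?S w D" using is_cycle_mono[OF D(1)] by blast
    ultimately show ?thesis using D(2) by blast
  qed
qed

lemma support_contains_structure:
  assumes y: "y \<in> cone" "y \<noteq> (\<lambda>_. 0)"
  defines "S \<equiv> support y"
  shows "(\<exists>v C. is_cycle tail head S v C \<and> wgain \<gamma> C = 1)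
    \<or> (\<exists>v w C P D. is_cycle tail head S v C \<and> 1 < wgain \<gamma> C \<and> is_cycle tail head S w D
          \<and> wgain \<gamma> D < 1 \<and> is_path tail head S v P w)
    \<or> (\<exists>v C P. is_cycle tail head S v C \<and> 1 < wgain \<gamma> C \<and> is_path tail head S v P u)"
proof -
  obtain v C where C: "is_cycle tail head S v C" "1 \<le> wgain \<gamma> C"
    using support_has_nonabsorbing_cycle[OF y] by (auto simp: S_def)
  consider "wgain \<gamma> C = 1" | "1 < wgain \<gamma> C" using C(2) by linarith
  then show ?thesis
  proof cases
    case 1
    then show ?thesis using C(1) by blast
  next
    case 2
    have "wgain \<gamma> D = 1 \<or> wgain \<gamma> D < 1" if "wgain \<gamma> D \<le> 1" for D
      using that by linarith
    then show ?thesis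
      using reaches_root_or_nongenerating_cycle[OF y(1) C(1)[unfolded S_def]] C(1) 2
      unfolding S_def by blast
  qed
qed

lemma negative_structure_if_improving_ray:
  assumes "z0 \<in> cone" "objective z0 < 0"
  shows "has_neg_unit_gain_cycle tail head nonroot_arcs c \<gamma>
     \<or> has_neg_bicycle tail head nonroot_arcs c \<gamma>
     \<or> has_du_neg_fg_cycle tail head nonroot_arcs c \<gamma> \<delta> u"
proof -
  obtain y where y: "y \<in> cone" "objective y < 0"
    and minimal: "\<And>z. z \<in> cone \<Longrightarrow> z \<noteq> (\<lambda>_. 0) \<Longrightarrow> support z \<subseteq> support y \<Longrightarrow> objective z < 0"
    using lp_support_minimal_improving_ray[OF finite_E assms] by blast
  have "y \<noteq> (\<lambda>_. 0)" using y(2) by auto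
  have S: "support y \<subseteq> nonroot_arcs" using cone_support_nonroot[OF y(1)] .
  show ?thesis
    using support_contains_structure[OF y(1) \<open>y \<noteq> (\<lambda>_. 0)\<close>]
  proof (elim disjE exE conjE)
    fix v C assume C: "is_cycle tail head (support y) v C" "wgain \<gamma> C = 1"
    have "wcost c \<gamma> C < 0" using unit_gain_cycle_ray[OF S C] minimal by blast
    then show ?thesis
      using is_cycle_mono[OF C(1) S] C(2) unfolding has_neg_unit_gain_cycle_def by blast
  next
    fix v w C P D
    assume B: "is_cycle tail head (support y) v C" "1 < wgain \<gamma> C"
      "is_cycle tail head (support y) w D" "wgain \<gamma> D < 1" "is_path tail head (support y) v P w"
    have "wcost c \<gamma> P + wgain \<gamma> P * (wcost c \<gamma> D / (1 - wgain \<gamma> D)) < - wcost c \<gamma> C / (wgain \<gamma> C - 1)"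
      using bicycle_ray[OF S B] minimal by blast
    then show ?thesis
      using is_cycle_mono[OF B(1) S] is_cycle_mono[OF B(3) S] is_path_mono[OF B(5) S] B(2,4)
      unfolding has_neg_bicycle_def by blast
  next
    fix v C P
    assume R: "is_cycle tail head (support y) v C" "1 < wgain \<gamma> C" "is_path tail head (support y) v P u"
    have "wcost c \<gamma> C + (wgain \<gamma> C - 1) * (wcost c \<gamma> P + wgain \<gamma> P * \<delta>) < 0"
      using root_path_ray[OF S R] minimal by blast
    then show ?thesis
      using is_cycle_mono[OF R(1) S] is_path_mono[OF R(3) S] R(2)
      unfolding has_du_neg_fg_cycle_def by blast
  qed
qed

lemma improving_ray_if_negative_structure:
  assumes "has_neg_unit_gain_cycle tail head nonroot_arcs c \<gamma>
     \<or> has_neg_bicycle tail head nonroot_arcs c \<gamma>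
     \<or> has_du_neg_fg_cycle tail head nonroot_arcs c \<gamma> \<delta> u"
  shows "\<exists>z\<in>cone. objective z < 0"
  using assms unit_gain_cycle_ray[OF order_refl] bicycle_ray[OF order_refl] root_path_ray[OF order_refl]
  unfolding has_neg_unit_gain_cycle_def has_neg_bicycle_def has_du_neg_fg_cycle_def
  by blast

lemma fval_eq_minf_iff:
  "fval V E tail head c \<gamma> u \<delta> = -\<infinity> \<longleftrightarrow> Dset V E tail head \<gamma> u \<noteq> {} \<and> (\<exists>z\<in>cone. objective z < 0)"
proof -
  have "fval V E tail head c \<gamma> u \<delta> = -\<infinity> \<longleftrightarrow> (\<forall>B. \<exists>x\<in>Dset V E tail head \<gamma> u. objective x < B)"
    unfolding fval_eq INF_ereal_eq_minf_iff
  proof (intro iffI allI)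
    fix B
    assume "\<forall>B. \<exists>x\<in>Dset V E tail head \<gamma> u. objective x - \<delta> < B"
    then obtain x where x: "x \<in> Dset V E tail head \<gamma> u" "objective x - \<delta> < B - \<delta>" by blast
    then have "objective x < B" by linarith
    with x(1) show "\<exists>x\<in>Dset V E tail head \<gamma> u. objective x < B" by blast
  next
    fix B
    assume "\<forall>B. \<exists>x\<in>Dset V E tail head \<gamma> u. objective x < B"
    then obtain x where x: "x \<in> Dset V E tail head \<gamma> u" "objective x < B + \<delta>" by blast
    then have "objective x - \<delta> < B" by linarith
    with x(1) show "\<exists>x\<in>Dset V E tail head \<gamma> u. objective x - \<delta> < B" by blast
  qed
  then show ?thesis
    unfolding Dset_eq lp_unbounded_iff_improving_ray[OF finite_E] .
qed

end

theorem lemma4p6: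
  fixes V :: "'v set" and E :: "'e set" and tail head :: "'e \<Rightarrow> 'v"
    and c \<gamma> :: "'e \<Rightarrow> real" and u :: 'v and \<delta> :: real
  assumes "finite V" "finite E"
    and "\<forall>e\<in>E. tail e \<in> V \<and> head e \<in> V"
    and "\<forall>e\<in>E. \<gamma> e > 0"
    and "u \<in> V"
  shows "fval V E tail head c \<gamma> u \<delta> = -\<infinity> \<longleftrightarrow>
     (Dset V E tail head \<gamma> u \<noteq> {} \<and>
       (let A = {e\<in>E. tail e \<noteq> u} in
         has_neg_unit_gain_cycle tail head A c \<gamma>
         \<or> has_neg_bicycle tail head A c \<gamma>
         \<or> has_du_neg_fg_cycle tail head A c \<gamma> \<delta> u))"
proof -
  interpret rooted_gain_graph V E tail head \<gamma> u c \<delta>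
    using assms by unfold_locales auto
  have "(\<exists>z\<in>cone. objective z < 0) \<longleftrightarrow>
      has_neg_unit_gain_cycle tail head nonroot_arcs c \<gamma>
      \<or> has_neg_bicycle tail head nonroot_arcs c \<gamma>
      \<or> has_du_neg_fg_cycle tail head nonroot_arcs c \<gamma> \<delta> u"
    using negative_structure_if_improving_ray improving_ray_if_negative_structure by blast
  then show ?thesis
    unfolding fval_eq_minf_iff by (simp add: Let_def)
qed

end
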